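(* Let $X$ be an infinite discrete space and $G$ a subgroup of $\mathrm S(X)$ with the permutation topology $\tau_\partial$. Let $\mathcal U_X$ be the maximal equiuniformity on $X$, $\mathcal U$ the uniformity on $G$ defined below, and $L\wedge R$ the Roelcke uniformity of $G$. (1) Suppose that for any points $x_1,\dots,x_n\in X$, $n\in\mathbb N$, and any $g,h\in G$ with $h(x_k)\in \mathrm{St}_{x_1,\dots,x_n}\,g(x_k)$ for $k=1,\dots,n$, there exist $f\in\mathrm{St}_{x_1,\dots,x_n}$ and $g'\in g\,\mathrm{St}_{x_1,\dots,x_n}$ with $h=f\circ g'$. Then $L\wedge R=\mathcal U$. (2) If $L\wedge R=\mathcal U$ and $\mathcal U_X$ is totally bounded, then $G$ is Roelcke precompact and the Roelcke compactification of $G$ is the closure of $\imath(G)$ in $(\beta_GX)^X$. (3) Suppose $L\wedge R=\mathcal U$ and $\mathcal U_X$ is totally bounded, and suppose that for every point $x\in\beta_GX\setminus X$ and every entourage $U$ of $\tilde{\mathcal U}_X$ there exist points $x_1,\dots,x_n\in X$ and an entourage $V$ of $\tilde{\mathcal U}_X$ such that for every $g\in G$ $$\{h\in G\mid (g(x_k),h(x_k))\in V,\ k=1,\dots,n\}\subset\{h\in G\mid (g(x),h(x))\in U\}.$$ Then $\mathcal U=\tilde{\mathcal U}$ and the Roelcke compactification of $(G,\tau_\partial)$ is the enveloping Ellis semigroup of the action $G\curvearrowright\beta_GX$, i.e. the closure of $\jmath(G)$ in $(\beta_GX)^{\beta_GX}$.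
   Context: $\tau_\partial$: group topology with identity neighbourhood base the pointwise stabilizers $\mathrm{St}_{x_1,\dots,x_n}=\{g\mid g(x_i)=x_i\}$. The maximal equiuniformity $\mathcal U_X$ has as base the partitions $\{\mathrm{St}_{x_1,\dots,x_n}x\mid x\in X\}$ of $X$ into orbits of stabilizers, $x_1,\dots,x_n\in X$. $\beta_GX$ is the completion of $X$ with respect to $\mathcal U_X$ (when totally bounded, the maximal equivariant compactification), $\tilde{\mathcal U}_X$ the extension of $\mathcal U_X$ to $\beta_GX$; each $g\in G$ extends continuously to $\beta_GX$. $\imath:G\to X^X\subset(\beta_GX)^X$, $\imath(g)=(g(x))_{x\in X}$, and $\jmath:G\to(\beta_GX)^{\beta_GX}$, $\jmath(g)=(g(x))_{x\in\beta_GX}$. $\mathcal U$ is the restriction to $\imath(G)=G$ of the product uniformity on $X^X$ of copies of $\mathcal U_X$ (base: coverings $\{\{h\mid (g(x_k),h(x_k))\in\mathrm U,\ k\le n\}\mid g\in G\}$); $\tilde{\mathcal U}$ is the restriction to $\jmath(G)=G$ of the product uniformity on $(\beta_GX)^{\beta_GX}$ of copies of $\tilde{\mathcal U}_X$. The Roelcke uniformity $L\wedge R$ is the greatest lower bound of the left and right uniformities; $G$ is Roelcke precompact if it is totally bounded, and then the Roelcke compactification is the completion of $G$ with respect to $L\wedge R$. *)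

theory Defs
  imports Main "HOL-Library.FuncSet"
begin

definition uniformity_on :: "'a set \<Rightarrow> ('a \<times> 'a) set set \<Rightarrow> bool" where
  "uniformity_on A \<U> \<longleftrightarrow>
     \<U> \<noteq> {} \<and>
     (\<forall>E\<in>\<U>. Id_on A \<subseteq> E \<and> E \<subseteq> A \<times> A) \<and>
     (\<forall>E\<in>\<U>. \<forall>F. E \<subseteq> F \<and> F \<subseteq> A \<times> A \<longrightarrow> F \<in> \<U>) \<and>
     (\<forall>E\<in>\<U>. \<forall>F\<in>\<U>. E \<inter> F \<in> \<U>) \<and>
     (\<forall>E\<in>\<U>. E\<inverse> \<in> \<U>) \<and>
     (\<forall>E\<in>\<U>. \<exists>F\<in>\<U>. F O F \<subseteq> E)"

definition gen_unif :: "'a set \<Rightarrow> ('a \<times> 'a) set set \<Rightarrow> ('a \<times> 'a) set set" where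
  "gen_unif A \<B> = {E. E \<subseteq> A \<times> A \<and> (\<exists>B\<in>\<B>. B \<subseteq> E)}"

definition unif_glb :: "'a set \<Rightarrow> ('a \<times> 'a) set set \<Rightarrow> ('a \<times> 'a) set set \<Rightarrow> ('a \<times> 'a) set set \<Rightarrow> bool" where
  "unif_glb A \<U>1 \<U>2 \<W> \<longleftrightarrow>
     uniformity_on A \<W> \<and> \<W> \<subseteq> \<U>1 \<and> \<W> \<subseteq> \<U>2 \<and>
     (\<forall>\<V>. uniformity_on A \<V> \<and> \<V> \<subseteq> \<U>1 \<and> \<V> \<subseteq> \<U>2 \<longrightarrow> \<V> \<subseteq> \<W>)"

definition totally_bounded_unif :: "'a set \<Rightarrow> ('a \<times> 'a) set set \<Rightarrow> bool" where
  "totally_bounded_unif A \<U> \<longleftrightarrow>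
     (\<forall>E\<in>\<U>. \<exists>F. finite F \<and> F \<subseteq> A \<and> A \<subseteq> (\<Union>y\<in>F. E `` {y}))"

definition unif_closure :: "'a set \<Rightarrow> ('a \<times> 'a) set set \<Rightarrow> 'a set \<Rightarrow> 'a set" where
  "unif_closure B \<V> S = {y \<in> B. \<forall>E\<in>\<V>. E `` {y} \<inter> S \<noteq> {}}"

definition cauchy_filter :: "'a set \<Rightarrow> ('a \<times> 'a) set set \<Rightarrow> 'a filter \<Rightarrow> bool" where
  "cauchy_filter B \<V> F \<longleftrightarrow>
     F \<noteq> bot \<and> eventually (\<lambda>x. x \<in> B) F \<and>
     (\<forall>E\<in>\<V>. \<exists>S. eventually (\<lambda>x. x \<in> S) F \<and> S \<times> S \<subseteq> E)"

definition complete_unif :: "'a set \<Rightarrow> ('a \<times> 'a) set set \<Rightarrow> bool" where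
  "complete_unif B \<V> \<longleftrightarrow>
     (\<forall>F. cauchy_filter B \<V> F \<longrightarrow> (\<exists>y\<in>B. \<forall>E\<in>\<V>. eventually (\<lambda>x. (y, x) \<in> E) F))"

definition separated_unif :: "'a set \<Rightarrow> ('a \<times> 'a) set set \<Rightarrow> bool" where
  "separated_unif B \<V> \<longleftrightarrow> (\<forall>x\<in>B. \<forall>y\<in>B. (\<forall>E\<in>\<V>. (x, y) \<in> E) \<longrightarrow> x = y)"

definition unif_continuous :: "'a set \<Rightarrow> ('a \<times> 'a) set set \<Rightarrow> 'b set \<Rightarrow> ('b \<times> 'b) set set \<Rightarrow> ('a \<Rightarrow> 'b) \<Rightarrow> bool" where
  "unif_continuous A \<U> B \<V> f \<longleftrightarrow>
     f ` A \<subseteq> B \<and> (\<forall>D\<in>\<V>. \<exists>E\<in>\<U>. \<forall>(a, b)\<in>E. (f a, f b) \<in> D)"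

definition unif_embedding :: "'a set \<Rightarrow> ('a \<times> 'a) set set \<Rightarrow> 'b set \<Rightarrow> ('b \<times> 'b) set set \<Rightarrow> ('a \<Rightarrow> 'b) \<Rightarrow> bool" where
  "unif_embedding A \<U> B \<V> f \<longleftrightarrow>
     f ` A \<subseteq> B \<and> inj_on f A \<and>
     \<U> = {E. E \<subseteq> A \<times> A \<and> (\<exists>D\<in>\<V>. {(a, b) \<in> A \<times> A. (f a, f b) \<in> D} \<subseteq> E)}"

definition is_completion :: "'a set \<Rightarrow> ('a \<times> 'a) set set \<Rightarrow> ('a \<Rightarrow> 'b) \<Rightarrow> 'b set \<Rightarrow> ('b \<times> 'b) set set \<Rightarrow> bool" where
  "is_completion A \<U> f B \<V> \<longleftrightarrow>
     uniformity_on B \<V> \<and> unif_embedding A \<U> B \<V> f \<and>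
     unif_closure B \<V> (f ` A) = B \<and> complete_unif B \<V> \<and> separated_unif B \<V>"

definition prod_unif :: "'i set \<Rightarrow> 'b set \<Rightarrow> ('b \<times> 'b) set set \<Rightarrow> (('i \<Rightarrow> 'b) \<times> ('i \<Rightarrow> 'b)) set set" where
  "prod_unif I B \<V> = gen_unif (Pi\<^sub>E I (\<lambda>_. B))
     {{(\<phi>, \<psi>) \<in> Pi\<^sub>E I (\<lambda>_. B) \<times> Pi\<^sub>E I (\<lambda>_. B). \<forall>i\<in>F. (\<phi> i, \<psi> i) \<in> V} | F V.
        finite F \<and> F \<subseteq> I \<and> V \<in> \<V>}"

definition restrict_unif :: "'a set \<Rightarrow> ('a \<times> 'a) set set \<Rightarrow> ('a \<times> 'a) set set" where
  "restrict_unif C \<W> = {E \<inter> (C \<times> C) | E. E \<in> \<W>}"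

section \<open>Permutation groups on X = UNIV\<close>

definition perm_group :: "('a \<Rightarrow> 'a) set \<Rightarrow> bool" where
  "perm_group G \<longleftrightarrow> G \<subseteq> {f. bij f} \<and> id \<in> G \<and>
     (\<forall>f\<in>G. \<forall>g\<in>G. f \<circ> g \<in> G) \<and> (\<forall>f\<in>G. inv f \<in> G)"

definition St :: "('a \<Rightarrow> 'a) set \<Rightarrow> 'a list \<Rightarrow> ('a \<Rightarrow> 'a) set" where
  "St G xs = {g \<in> G. \<forall>x\<in>set xs. g x = x}"

text \<open>Partition of X into St_{xs}-orbits, as an equivalence relation.\<close>
definition orb_rel :: "('a \<Rightarrow> 'a) set \<Rightarrow> 'a list \<Rightarrow> ('a \<times> 'a) set" where
  "orb_rel G xs = {(x, y). \<exists>f\<in>St G xs. y = f x}"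

definition UX :: "('a \<Rightarrow> 'a) set \<Rightarrow> ('a \<times> 'a) set set" where
  "UX G = gen_unif UNIV {orb_rel G xs | xs. True}"

definition left_unif :: "('a \<Rightarrow> 'a) set \<Rightarrow> (('a \<Rightarrow> 'a) \<times> ('a \<Rightarrow> 'a)) set set" where
  "left_unif G = gen_unif G {{(g, h) \<in> G \<times> G. \<exists>s\<in>St G xs. h = g \<circ> s} | xs. True}"

definition right_unif :: "('a \<Rightarrow> 'a) set \<Rightarrow> (('a \<Rightarrow> 'a) \<times> ('a \<Rightarrow> 'a)) set set" where
  "right_unif G = gen_unif G {{(g, h) \<in> G \<times> G. \<exists>s\<in>St G xs. h = s \<circ> g} | xs. True}"

definition roelcke_unif :: "('a \<Rightarrow> 'a) set \<Rightarrow> (('a \<Rightarrow> 'a) \<times> ('a \<Rightarrow> 'a)) set set" where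
  "roelcke_unif G = (THE \<W>. unif_glb G (left_unif G) (right_unif G) \<W>)"

text \<open>The uniformity \<U> on G: restriction of the product uniformity of copies of U_X on X^X.\<close>
definition UG :: "('a \<Rightarrow> 'a) set \<Rightarrow> (('a \<Rightarrow> 'a) \<times> ('a \<Rightarrow> 'a)) set set" where
  "UG G = gen_unif G {{(g, h) \<in> G \<times> G. \<forall>x\<in>set xs. (g x, h x) \<in> W} | xs W. W \<in> UX G}"

text \<open>The uniformity \<tilde>\<U> on G: restriction of the product uniformity of copies of the
  completion uniformity on (beta_G X)^(beta_G X); ext g is the extension of g.\<close>
definition UGt :: "('a \<Rightarrow> 'a) set \<Rightarrow> 'b set \<Rightarrow> ('b \<times> 'b) set set \<Rightarrow> (('a \<Rightarrow> 'a) \<Rightarrow> 'b \<Rightarrow> 'b)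
     \<Rightarrow> (('a \<Rightarrow> 'a) \<times> ('a \<Rightarrow> 'a)) set set" where
  "UGt G B \<V> ext = gen_unif G
     {{(g, h) \<in> G \<times> G. \<forall>y\<in>set ys. (ext g y, ext h y) \<in> W} | ys W. set ys \<subseteq> B \<and> W \<in> \<V>}"

end

theory Submission
  imports Defs
begin

(*
  (1) The uniformity U is generated by the orbit entourages of G, the sets of pairs (g, h)
  with h x in the St_xs-orbit of g x for all x in xs.  Such a set contains the basic entourages
  of L and of R for xs, so U is coarser than both.  Conversely, the double coset hypothesis puts
  the orbit entourage of xs @ ys inside R_ys O L_xs.  A uniformity coarser than L and R has,
  inside each of its entourages, some F O F with F containing such R_ys and L_xs; hence it is
  coarser than U, and U is the Roelcke uniformity.

  (2) U is induced by the embedding g |-> e o g of G into the power B^X of the completion B of X,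
  and the closure of a subset of a complete separated uniform space is a completion of it.
  Total boundedness passes from U_X to U since an orbit entourage of xs only distinguishes the
  finitely many St_xs-orbits of the points g x, x in xs.

  (3) The hypothesis on the remainder says that for x in B - X the coordinate g |-> ext g x is
  uniformly continuous for U; for points of X this is automatic.  Hence the coordinates at all
  points of B already induce U, and the closure argument of (2) applies in B^B.
*)

section \<open>Uniformities on a carrier set\<close>

lemma mem_gen_unif: "E \<in> gen_unif A \<B> \<longleftrightarrow> E \<subseteq> A \<times> A \<and> (\<exists>B\<in>\<B>. B \<subseteq> E)"
  by (simp add: gen_unif_def)

lemma gen_unif_eqI:
  assumes "\<And>B. B \<in> \<B>1 \<Longrightarrow> \<exists>B'\<in>\<B>2. B' \<subseteq> B" and "\<And>B. B \<in> \<B>2 \<Longrightarrow> \<exists>B'\<in>\<B>1. B' \<subseteq> B"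
  shows "gen_unif A \<B>1 = gen_unif A \<B>2"
  unfolding gen_unif_def using assms by (meson order_trans)

lemma uniformity_onI:
  assumes "\<U> \<noteq> {}"
    and "\<And>E. E \<in> \<U> \<Longrightarrow> Id_on A \<subseteq> E \<and> E \<subseteq> A \<times> A"
    and "\<And>E F. E \<in> \<U> \<Longrightarrow> E \<subseteq> F \<Longrightarrow> F \<subseteq> A \<times> A \<Longrightarrow> F \<in> \<U>"
    and "\<And>E F. E \<in> \<U> \<Longrightarrow> F \<in> \<U> \<Longrightarrow> E \<inter> F \<in> \<U>"
    and "\<And>E. E \<in> \<U> \<Longrightarrow> E\<inverse> \<in> \<U>"
    and "\<And>E. E \<in> \<U> \<Longrightarrow> \<exists>F\<in>\<U>. F O F \<subseteq> E"
  shows "uniformity_on A \<U>"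
  unfolding uniformity_on_def using assms by auto

lemma uniformity_onD:
  assumes "uniformity_on A \<U>"
  shows "\<And>E. E \<in> \<U> \<Longrightarrow> Id_on A \<subseteq> E"
    and "\<And>E. E \<in> \<U> \<Longrightarrow> E \<subseteq> A \<times> A"
    and "\<And>E F. E \<in> \<U> \<Longrightarrow> E \<subseteq> F \<Longrightarrow> F \<subseteq> A \<times> A \<Longrightarrow> F \<in> \<U>"
    and "\<And>E F. E \<in> \<U> \<Longrightarrow> F \<in> \<U> \<Longrightarrow> E \<inter> F \<in> \<U>"
    and "\<And>E. E \<in> \<U> \<Longrightarrow> E\<inverse> \<in> \<U>"
    and "\<And>E. E \<in> \<U> \<Longrightarrow> \<exists>F\<in>\<U>. F O F \<subseteq> E"
proof -
  note \<U> = assms[unfolded uniformity_on_def]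
  from \<U> have Id: "\<forall>E\<in>\<U>. Id_on A \<subseteq> E \<and> E \<subseteq> A \<times> A" by (elim conjE) assumption
  from \<U> have mono: "\<forall>E\<in>\<U>. \<forall>F. E \<subseteq> F \<and> F \<subseteq> A \<times> A \<longrightarrow> F \<in> \<U>" by (elim conjE) assumption
  from \<U> have Int: "\<forall>E\<in>\<U>. \<forall>F\<in>\<U>. E \<inter> F \<in> \<U>" by (elim conjE) assumption
  from \<U> have converse: "\<forall>E\<in>\<U>. E\<inverse> \<in> \<U>" by (elim conjE) assumption
  from \<U> have half: "\<forall>E\<in>\<U>. \<exists>F\<in>\<U>. F O F \<subseteq> E" by (elim conjE) assumption
  show "\<And>E. E \<in> \<U> \<Longrightarrow> Id_on A \<subseteq> E" "\<And>E. E \<in> \<U> \<Longrightarrow> E \<subseteq> A \<times> A"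
    using Id by blast+
  show "\<And>E F. E \<in> \<U> \<Longrightarrow> E \<subseteq> F \<Longrightarrow> F \<subseteq> A \<times> A \<Longrightarrow> F \<in> \<U>"
    using mono by blast
  show "\<And>E F. E \<in> \<U> \<Longrightarrow> F \<in> \<U> \<Longrightarrow> E \<inter> F \<in> \<U>" using Int by blast
  show "\<And>E. E \<in> \<U> \<Longrightarrow> E\<inverse> \<in> \<U>" using converse by blast
  show "\<And>E. E \<in> \<U> \<Longrightarrow> \<exists>F\<in>\<U>. F O F \<subseteq> E" using half by blast
qed

lemma uniformity_on_square:
  assumes "uniformity_on A \<U>"
  shows "A \<times> A \<in> \<U>"
proof -
  have "\<U> \<noteq> {}" using assms unfolding uniformity_on_def by (elim conjE)
  then obtain E where "E \<in> \<U>" by blast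
  then show ?thesis using uniformity_onD(2,3)[OF assms] by blast
qed

lemma uniformity_on_INT:
  assumes "uniformity_on A \<U>" "finite I" "\<And>i. i \<in> I \<Longrightarrow> E i \<in> \<U>"
  shows "A \<times> A \<inter> (\<Inter>i\<in>I. E i) \<in> \<U>"
  using assms(2,3)
proof (induction I rule: finite_induct)
  case empty
  show ?case using uniformity_on_square[OF assms(1)] by simp
next
  case (insert i I)
  have "A \<times> A \<inter> (\<Inter>j\<in>insert i I. E j) = E i \<inter> (A \<times> A \<inter> (\<Inter>j\<in>I. E j))"
    using uniformity_onD(2)[OF assms(1) insert.prems[of i]] by auto
  then show ?case using insert uniformity_onD(4)[OF assms(1)] by simp
qed

lemma uniformity_on_gen_unif:
  assumes "\<B> \<noteq> {}"
    and "\<And>B. B \<in> \<B> \<Longrightarrow> Id_on A \<subseteq> B \<and> B \<subseteq> A \<times> A"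
    and "\<And>B C. B \<in> \<B> \<Longrightarrow> C \<in> \<B> \<Longrightarrow> \<exists>D\<in>\<B>. D \<subseteq> B \<inter> C"
    and "\<And>B. B \<in> \<B> \<Longrightarrow> \<exists>C\<in>\<B>. C \<subseteq> B\<inverse>"
    and "\<And>B. B \<in> \<B> \<Longrightarrow> \<exists>C\<in>\<B>. C O C \<subseteq> B"
  shows "uniformity_on A (gen_unif A \<B>)"
  unfolding uniformity_on_def
proof (intro conjI ballI allI impI)
  obtain B where "B \<in> \<B>" using assms(1) by blast
  then have "A \<times> A \<in> gen_unif A \<B>" using assms(2) by (auto simp: mem_gen_unif)
  then show "gen_unif A \<B> \<noteq> {}" by blast
next
  fix E F assume "E \<in> gen_unif A \<B>" "F \<in> gen_unif A \<B>"
  then obtain B C where BC: "B \<in> \<B>" "C \<in> \<B>" "B \<subseteq> E" "C \<subseteq> F" and "E \<subseteq> A \<times> A"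
    unfolding mem_gen_unif by blast
  moreover obtain D where "D \<in> \<B>" "D \<subseteq> B \<inter> C" using assms(3)[OF BC(1,2)] by blast
  ultimately have "D \<subseteq> E \<inter> F" "E \<inter> F \<subseteq> A \<times> A" by auto
  with \<open>D \<in> \<B>\<close> show "E \<inter> F \<in> gen_unif A \<B>" unfolding mem_gen_unif by blast
next
  fix E F assume "E \<in> gen_unif A \<B>" "E \<subseteq> F \<and> F \<subseteq> A \<times> A"
  then show "F \<in> gen_unif A \<B>" by (auto simp: mem_gen_unif)
next
  fix E assume "E \<in> gen_unif A \<B>"
  then obtain B where B: "B \<in> \<B>" "B \<subseteq> E" and E: "E \<subseteq> A \<times> A" by (auto simp: mem_gen_unif)
  then show "Id_on A \<subseteq> E" "E \<subseteq> A \<times> A" using assms(2) by blast+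
  obtain C where "C \<in> \<B>" "C \<subseteq> B\<inverse>" using assms(4) B by blast
  moreover have "B\<inverse> \<subseteq> E\<inverse>" "E\<inverse> \<subseteq> A \<times> A" using B E by auto
  ultimately show "E\<inverse> \<in> gen_unif A \<B>" unfolding mem_gen_unif by blast
  obtain C where C: "C \<in> \<B>" "C O C \<subseteq> B" using assms(5) B by blast
  have "C O C \<subseteq> E" using C(2) B(2) by (rule order_trans)
  moreover have "C \<in> gen_unif A \<B>" using assms(2) C(1) by (auto simp: mem_gen_unif)
  ultimately show "\<exists>F\<in>gen_unif A \<B>. F O F \<subseteq> E" by (rule bexI)
qed

lemma unif_glbD:
  assumes "unif_glb A \<U>1 \<U>2 \<W>"
  shows "uniformity_on A \<W>" "\<W> \<subseteq> \<U>1" "\<W> \<subseteq> \<U>2"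
    and "\<And>\<V>. uniformity_on A \<V> \<Longrightarrow> \<V> \<subseteq> \<U>1 \<Longrightarrow> \<V> \<subseteq> \<U>2 \<Longrightarrow> \<V> \<subseteq> \<W>"
  using assms unfolding unif_glb_def by simp_all

lemma unif_glb_unique: "unif_glb A \<U>1 \<U>2 \<W> \<Longrightarrow> unif_glb A \<U>1 \<U>2 \<W>' \<Longrightarrow> \<W> = \<W>'"
  by (meson subset_antisym unif_glbD)

section \<open>Subspaces, closures and completions\<close>

lemma mem_restrict_unif: "E \<in> restrict_unif C \<U> \<longleftrightarrow> (\<exists>E'\<in>\<U>. E = E' \<inter> C \<times> C)"
  by (auto simp: restrict_unif_def)

lemma uniformity_on_restrict_unif:
  assumes \<U>: "uniformity_on P \<U>" and "C \<subseteq> P"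
  shows "uniformity_on C (restrict_unif C \<U>)"
proof (rule uniformity_onI)
  show "restrict_unif C \<U> \<noteq> {}"
    using uniformity_on_square[OF \<U>] by (auto simp: restrict_unif_def)
next
  fix E assume "E \<in> restrict_unif C \<U>"
  then obtain E' where "E' \<in> \<U>" "E = E' \<inter> C \<times> C" by (auto simp: mem_restrict_unif)
  then show "Id_on C \<subseteq> E \<and> E \<subseteq> C \<times> C"
    using uniformity_onD(1)[OF \<U>] \<open>C \<subseteq> P\<close> by (auto simp: Id_on_def)
next
  fix E F assume "E \<in> restrict_unif C \<U>" "E \<subseteq> F" "F \<subseteq> C \<times> C"
  then obtain E' where E': "E' \<in> \<U>" "E = E' \<inter> C \<times> C" by (auto simp: mem_restrict_unif)
  have "E' \<union> F \<in> \<U>"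
    using uniformity_onD(2)[OF \<U> E'(1)] \<open>F \<subseteq> C \<times> C\<close> \<open>C \<subseteq> P\<close>
    by (intro uniformity_onD(3)[OF \<U> E'(1)]) auto
  moreover have "F = (E' \<union> F) \<inter> C \<times> C" using E' \<open>E \<subseteq> F\<close> \<open>F \<subseteq> C \<times> C\<close> by blast
  ultimately show "F \<in> restrict_unif C \<U>" by (auto simp: mem_restrict_unif)
next
  fix E F assume "E \<in> restrict_unif C \<U>" "F \<in> restrict_unif C \<U>"
  then obtain E' F' where "E' \<in> \<U>" "F' \<in> \<U>" "E = E' \<inter> C \<times> C" "F = F' \<inter> C \<times> C"
    by (auto simp: mem_restrict_unif)
  then have "E' \<inter> F' \<in> \<U>" "E \<inter> F = (E' \<inter> F') \<inter> C \<times> C" using uniformity_onD(4)[OF \<U>] by auto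
  then show "E \<inter> F \<in> restrict_unif C \<U>" by (auto simp: mem_restrict_unif)
next
  fix E assume "E \<in> restrict_unif C \<U>"
  then obtain E' where E': "E' \<in> \<U>" "E = E' \<inter> C \<times> C" by (auto simp: mem_restrict_unif)
  then have "E'\<inverse> \<in> \<U>" "E\<inverse> = E'\<inverse> \<inter> C \<times> C" using uniformity_onD(5)[OF \<U>] by auto
  then show "E\<inverse> \<in> restrict_unif C \<U>" by (auto simp: mem_restrict_unif)
  obtain F' where "F' \<in> \<U>" "F' O F' \<subseteq> E'" using uniformity_onD(6)[OF \<U> E'(1)] by blast
  then have "F' \<inter> C \<times> C \<in> restrict_unif C \<U>" "(F' \<inter> C \<times> C) O (F' \<inter> C \<times> C) \<subseteq> E"
    using E'(2) by (auto simp: mem_restrict_unif)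
  then show "\<exists>F\<in>restrict_unif C \<U>. F O F \<subseteq> E" by blast
qed

definition pullback_unif :: "'a set \<Rightarrow> ('a \<Rightarrow> 'b) \<Rightarrow> ('b \<times> 'b) set set \<Rightarrow> ('a \<times> 'a) set set" where
  "pullback_unif A f \<V> = {E. E \<subseteq> A \<times> A \<and> (\<exists>D\<in>\<V>. {(a, b) \<in> A \<times> A. (f a, f b) \<in> D} \<subseteq> E)}"

lemma unif_embedding_iff:
  "unif_embedding A \<U> B \<V> f \<longleftrightarrow> f ` A \<subseteq> B \<and> inj_on f A \<and> \<U> = pullback_unif A f \<V>"
  by (simp add: unif_embedding_def pullback_unif_def)

lemma pullback_restrict_unif:
  assumes "f ` A \<subseteq> C"
  shows "pullback_unif A f (restrict_unif C \<V>) = pullback_unif A f \<V>"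
proof -
  have restrict_bex: "(\<exists>D\<in>restrict_unif C \<V>. Q D) \<longleftrightarrow> (\<exists>D\<in>\<V>. Q (D \<inter> C \<times> C))" for Q
    by (auto simp: restrict_unif_def)
  have restrict_eq:
    "{(a, b) \<in> A \<times> A. (f a, f b) \<in> D \<inter> C \<times> C} = {(a, b) \<in> A \<times> A. (f a, f b) \<in> D}" for D
    using assms by auto
  show ?thesis unfolding pullback_unif_def restrict_bex restrict_eq ..
qed

lemma unif_closure_subset: "unif_closure P \<U> S \<subseteq> P"
  by (auto simp: unif_closure_def)

lemma subset_unif_closure:
  assumes "uniformity_on P \<U>" "S \<subseteq> P"
  shows "S \<subseteq> unif_closure P \<U> S"
proof
  fix y assume "y \<in> S"
  have "y \<in> E `` {y}" if "E \<in> \<U>" for E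
    using uniformity_onD(1)[OF assms(1) that] \<open>y \<in> S\<close> assms(2) by auto
  with \<open>y \<in> S\<close> assms(2) show "y \<in> unif_closure P \<U> S"
    unfolding unif_closure_def by auto
qed

lemma unif_closure_restrict_unif:
  assumes "uniformity_on P \<U>" "S \<subseteq> P"
  defines "C \<equiv> unif_closure P \<U> S"
  shows "unif_closure C (restrict_unif C \<U>) S = C"
proof -
  have "S \<subseteq> C" unfolding C_def by (rule subset_unif_closure[OF assms(1,2)])
  have "E `` {y} \<inter> S \<noteq> {}" if y: "y \<in> C" and E: "E \<in> restrict_unif C \<U>" for y E
  proof -
    obtain E' where "E' \<in> \<U>" "E = E' \<inter> C \<times> C" using E by (auto simp: mem_restrict_unif)
    moreover obtain z where "z \<in> E' `` {y}" "z \<in> S"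
      using y \<open>E' \<in> \<U>\<close> unfolding C_def unif_closure_def by auto
    ultimately show ?thesis using y \<open>S \<subseteq> C\<close> by auto
  qed
  then show ?thesis unfolding unif_closure_def by auto
qed

lemma separated_restrict_unif:
  assumes "separated_unif P \<U>" "C \<subseteq> P"
  shows "separated_unif C (restrict_unif C \<U>)"
  unfolding separated_unif_def
proof (intro ballI impI)
  fix x y assume "x \<in> C" "y \<in> C" and xy: "\<forall>E\<in>restrict_unif C \<U>. (x, y) \<in> E"
  have "(x, y) \<in> E" if "E \<in> \<U>" for E
    using xy[rule_format, of "E \<inter> C \<times> C"] that by (auto simp: mem_restrict_unif)
  then show "x = y" using assms \<open>x \<in> C\<close> \<open>y \<in> C\<close> unfolding separated_unif_def by blast
qed

lemma cauchy_filter_restrict_unif: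
  assumes "C \<subseteq> P" "cauchy_filter C (restrict_unif C \<U>) F"
  shows "cauchy_filter P \<U> F"
proof -
  have "F \<noteq> bot" "eventually (\<lambda>x. x \<in> C) F"
    and small: "\<forall>E\<in>restrict_unif C \<U>. \<exists>S. eventually (\<lambda>x. x \<in> S) F \<and> S \<times> S \<subseteq> E"
    using assms(2) unfolding cauchy_filter_def by simp_all
  have "eventually (\<lambda>x. x \<in> P) F"
    using \<open>eventually (\<lambda>x. x \<in> C) F\<close> by (rule eventually_mono) (use assms(1) in blast)
  moreover have "\<exists>S. eventually (\<lambda>x. x \<in> S) F \<and> S \<times> S \<subseteq> E" if "E \<in> \<U>" for E
  proof -
    have "E \<inter> C \<times> C \<in> restrict_unif C \<U>" using that by (auto simp: mem_restrict_unif)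
    then obtain S where "eventually (\<lambda>x. x \<in> S) F" "S \<times> S \<subseteq> E \<inter> C \<times> C"
      using small by blast
    then show ?thesis by blast
  qed
  ultimately show ?thesis using \<open>F \<noteq> bot\<close> unfolding cauchy_filter_def by blast
qed

lemma complete_unif_closure:
  fixes S :: "'a set"
  assumes \<U>: "uniformity_on P \<U>" and "complete_unif P \<U>"
  defines "C \<equiv> unif_closure P \<U> S"
  shows "complete_unif C (restrict_unif C \<U>)"
  unfolding complete_unif_def
proof (intro allI impI)
  fix F assume F: "cauchy_filter C (restrict_unif C \<U>) F"
  have "C \<subseteq> P" unfolding C_def by (rule unif_closure_subset)
  then have "cauchy_filter P \<U> F" using F by (rule cauchy_filter_restrict_unif)
  then obtain y where "y \<in> P" and lim: "\<forall>E\<in>\<U>. eventually (\<lambda>x. (y, x) \<in> E) F"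
    using assms(2) unfolding complete_unif_def by blast
  have F_C: "eventually (\<lambda>x. x \<in> C) F" and "F \<noteq> bot"
    using F unfolding cauchy_filter_def by simp_all
  have "E `` {y} \<inter> S \<noteq> {}" if "E \<in> \<U>" for E
  proof -
    obtain E' where E': "E' \<in> \<U>" "E' O E' \<subseteq> E" using uniformity_onD(6)[OF \<U> \<open>E \<in> \<U>\<close>] by blast
    have "eventually (\<lambda>x. (y, x) \<in> E' \<and> x \<in> C) F" using lim E'(1) F_C eventually_conj by blast
    then obtain x where "(y, x) \<in> E'" "x \<in> C" using \<open>F \<noteq> bot\<close> eventually_happens by blast
    then obtain z where "(x, z) \<in> E'" "z \<in> S" unfolding C_def unif_closure_def using E'(1) by blast
    with \<open>(y, x) \<in> E'\<close> E'(2) show ?thesis by blast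
  qed
  with \<open>y \<in> P\<close> have "y \<in> C" unfolding C_def unif_closure_def by blast
  moreover have "eventually (\<lambda>x. (y, x) \<in> E) F" if E: "E \<in> restrict_unif C \<U>" for E
  proof -
    obtain E' where "E' \<in> \<U>" "E = E' \<inter> C \<times> C" using E by (auto simp: mem_restrict_unif)
    with lim F_C \<open>y \<in> C\<close> show ?thesis by (auto elim: eventually_elim2)
  qed
  ultimately show "\<exists>y\<in>C. \<forall>E\<in>restrict_unif C \<U>. eventually (\<lambda>x. (y, x) \<in> E) F" by blast
qed

lemma is_completion_unif_closure:
  assumes \<U>: "uniformity_on P \<U>" and "complete_unif P \<U>" "separated_unif P \<U>"
    and "j ` A \<subseteq> P" "inj_on j A"
  defines "C \<equiv> unif_closure P \<U> (j ` A)"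
  shows "is_completion A (pullback_unif A j \<U>) j C (restrict_unif C \<U>)"
  unfolding is_completion_def unif_embedding_iff
proof (intro conjI)
  have "C \<subseteq> P" unfolding C_def by (rule unif_closure_subset)
  then show "uniformity_on C (restrict_unif C \<U>)" by (rule uniformity_on_restrict_unif[OF \<U>])
  show "separated_unif C (restrict_unif C \<U>)"
    using assms(3) \<open>C \<subseteq> P\<close> by (rule separated_restrict_unif)
  show "j ` A \<subseteq> C" unfolding C_def by (rule subset_unif_closure[OF \<U> assms(4)])
  then show "pullback_unif A j \<U> = pullback_unif A j (restrict_unif C \<U>)"
    by (simp add: pullback_restrict_unif)
  show "inj_on j A" by fact
  show "unif_closure C (restrict_unif C \<U>) (j ` A) = C"
    unfolding C_def by (rule unif_closure_restrict_unif[OF \<U> assms(4)])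
  show "complete_unif C (restrict_unif C \<U>)"
    unfolding C_def by (rule complete_unif_closure[OF \<U> assms(2)])
qed

section \<open>Powers of a uniform space\<close>

definition prod_box :: "'i set \<Rightarrow> 'b set \<Rightarrow> 'i set \<Rightarrow> ('b \<times> 'b) set \<Rightarrow> (('i \<Rightarrow> 'b) \<times> ('i \<Rightarrow> 'b)) set"
  where "prod_box I B F D =
    {(\<phi>, \<psi>) \<in> Pi\<^sub>E I (\<lambda>_. B) \<times> Pi\<^sub>E I (\<lambda>_. B). \<forall>i\<in>F. (\<phi> i, \<psi> i) \<in> D}"

lemma prod_unif_eq_gen_unif:
  "prod_unif I B \<V> =
    gen_unif (Pi\<^sub>E I (\<lambda>_. B)) {prod_box I B F D | F D. finite F \<and> F \<subseteq> I \<and> D \<in> \<V>}"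
  by (simp add: prod_unif_def prod_box_def)

lemma mem_prod_unif:
  "E \<in> prod_unif I B \<V> \<longleftrightarrow> E \<subseteq> Pi\<^sub>E I (\<lambda>_. B) \<times> Pi\<^sub>E I (\<lambda>_. B) \<and>
     (\<exists>F D. finite F \<and> F \<subseteq> I \<and> D \<in> \<V> \<and> prod_box I B F D \<subseteq> E)"
  unfolding prod_unif_eq_gen_unif mem_gen_unif by blast

lemma prod_box_in_prod_unif:
  "finite F \<Longrightarrow> F \<subseteq> I \<Longrightarrow> D \<in> \<V> \<Longrightarrow> prod_box I B F D \<in> prod_unif I B \<V>"
  unfolding mem_prod_unif by (auto simp: prod_box_def)

lemma uniformity_on_prod_unif:
  assumes \<V>: "uniformity_on B \<V>"
  shows "uniformity_on (Pi\<^sub>E I (\<lambda>_. B)) (prod_unif I B \<V>)"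
  unfolding prod_unif_eq_gen_unif
proof (rule uniformity_on_gen_unif)
  obtain D where "D \<in> \<V>" using uniformity_on_square[OF \<V>] by blast
  then show "{prod_box I B F D | F D. finite F \<and> F \<subseteq> I \<and> D \<in> \<V>} \<noteq> {}" by blast
next
  fix P assume "P \<in> {prod_box I B F D | F D. finite F \<and> F \<subseteq> I \<and> D \<in> \<V>}"
  then obtain F D where P: "P = prod_box I B F D" and F: "finite F" "F \<subseteq> I" and "D \<in> \<V>" by blast
  then show "Id_on (Pi\<^sub>E I (\<lambda>_. B)) \<subseteq> P \<and> P \<subseteq> Pi\<^sub>E I (\<lambda>_. B) \<times> Pi\<^sub>E I (\<lambda>_. B)"
    using uniformity_onD(1)[OF \<V> \<open>D \<in> \<V>\<close>] by (auto simp: prod_box_def Id_on_def)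
  obtain D' where "D' \<in> \<V>" "D' O D' \<subseteq> D" using uniformity_onD(6)[OF \<V> \<open>D \<in> \<V>\<close>] by blast
  then have "prod_box I B F D' O prod_box I B F D' \<subseteq> prod_box I B F D"
    by (auto simp: prod_box_def) (meson relcompI subsetD)
  with F \<open>D' \<in> \<V>\<close> show "\<exists>Q\<in>{prod_box I B F D | F D. finite F \<and> F \<subseteq> I \<and> D \<in> \<V>}. Q O Q \<subseteq> P"
    unfolding P by blast
  have "prod_box I B F (D\<inverse>) \<subseteq> P\<inverse>" unfolding P by (auto simp: prod_box_def)
  with F uniformity_onD(5)[OF \<V> \<open>D \<in> \<V>\<close>]
  show "\<exists>Q\<in>{prod_box I B F D | F D. finite F \<and> F \<subseteq> I \<and> D \<in> \<V>}. Q \<subseteq> P\<inverse>" by blast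
next
  fix P Q assume "P \<in> {prod_box I B F D | F D. finite F \<and> F \<subseteq> I \<and> D \<in> \<V>}"
    "Q \<in> {prod_box I B F D | F D. finite F \<and> F \<subseteq> I \<and> D \<in> \<V>}"
  then obtain F D F' D' where "P = prod_box I B F D" "Q = prod_box I B F' D'"
    and "finite F" "F \<subseteq> I" "D \<in> \<V>" "finite F'" "F' \<subseteq> I" "D' \<in> \<V>" by blast
  moreover have "prod_box I B (F \<union> F') (D \<inter> D') \<subseteq> prod_box I B F D \<inter> prod_box I B F' D'"
    by (auto simp: prod_box_def)
  moreover have "D \<inter> D' \<in> \<V>" using uniformity_onD(4)[OF \<V>] calculation by blast
  ultimately show "\<exists>R\<in>{prod_box I B F D | F D. finite F \<and> F \<subseteq> I \<and> D \<in> \<V>}. R \<subseteq> P \<inter> Q"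
    by blast
qed

lemma separated_prod_unif:
  assumes "separated_unif B \<V>"
  shows "separated_unif (Pi\<^sub>E I (\<lambda>_. B)) (prod_unif I B \<V>)"
  unfolding separated_unif_def
proof (intro ballI impI)
  fix \<phi> \<psi> assume \<phi>: "\<phi> \<in> Pi\<^sub>E I (\<lambda>_. B)" and \<psi>: "\<psi> \<in> Pi\<^sub>E I (\<lambda>_. B)"
    and close: "\<forall>E\<in>prod_unif I B \<V>. (\<phi>, \<psi>) \<in> E"
  have "\<phi> i = \<psi> i" if "i \<in> I" for i
  proof -
    have "(\<phi> i, \<psi> i) \<in> D" if "D \<in> \<V>" for D
      using close prod_box_in_prod_unif[of "{i}" I D \<V> B] \<open>i \<in> I\<close> that
      by (auto simp: prod_box_def)
    then show ?thesis using assms \<phi> \<psi> \<open>i \<in> I\<close> unfolding separated_unif_def by blast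
  qed
  then show "\<phi> = \<psi>" using \<phi> \<psi> by (rule PiE_ext[rotated 2])
qed

lemma cauchy_filter_coordinate:
  assumes F: "cauchy_filter (Pi\<^sub>E I (\<lambda>_. B)) (prod_unif I B \<V>) F" and "i \<in> I"
  shows "cauchy_filter B \<V> (filtermap (\<lambda>\<phi>. \<phi> i) F)"
proof -
  have "F \<noteq> bot" and F_P: "eventually (\<lambda>\<phi>. \<phi> \<in> Pi\<^sub>E I (\<lambda>_. B)) F"
    and small: "\<forall>E\<in>prod_unif I B \<V>. \<exists>S. eventually (\<lambda>x. x \<in> S) F \<and> S \<times> S \<subseteq> E"
    using F unfolding cauchy_filter_def by simp_all
  have "eventually (\<lambda>b. b \<in> B) (filtermap (\<lambda>\<phi>. \<phi> i) F)"
    unfolding eventually_filtermap using F_P by (rule eventually_mono) (use \<open>i \<in> I\<close> in auto)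
  moreover have "\<exists>S. eventually (\<lambda>b. b \<in> S) (filtermap (\<lambda>\<phi>. \<phi> i) F) \<and> S \<times> S \<subseteq> D"
    if "D \<in> \<V>" for D
  proof -
    have "prod_box I B {i} D \<in> prod_unif I B \<V>"
      using \<open>i \<in> I\<close> \<open>D \<in> \<V>\<close> by (intro prod_box_in_prod_unif) auto
    then obtain S where S: "eventually (\<lambda>x. x \<in> S) F" "S \<times> S \<subseteq> prod_box I B {i} D"
      using small by blast
    have "eventually (\<lambda>b. b \<in> (\<lambda>\<phi>. \<phi> i) ` S) (filtermap (\<lambda>\<phi>. \<phi> i) F)"
      unfolding eventually_filtermap using S(1) by (rule eventually_mono) auto
    moreover have "(\<lambda>\<phi>. \<phi> i) ` S \<times> (\<lambda>\<phi>. \<phi> i) ` S \<subseteq> D"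
      using S(2) by (auto simp: prod_box_def)
    ultimately show ?thesis by blast
  qed
  ultimately show ?thesis
    using \<open>F \<noteq> bot\<close> unfolding cauchy_filter_def by (simp add: filtermap_bot_iff)
qed

lemma complete_prod_unif:
  assumes "complete_unif B \<V>"
  shows "complete_unif (Pi\<^sub>E I (\<lambda>_. B)) (prod_unif I B \<V>)"
  unfolding complete_unif_def
proof (intro allI impI)
  fix F assume F: "cauchy_filter (Pi\<^sub>E I (\<lambda>_. B)) (prod_unif I B \<V>) F"
  have "\<forall>i\<in>I. \<exists>b. b \<in> B \<and> (\<forall>D\<in>\<V>. eventually (\<lambda>\<phi>. (b, \<phi> i) \<in> D) F)"
  proof
    fix i assume "i \<in> I"
    have "cauchy_filter B \<V> (filtermap (\<lambda>\<phi>. \<phi> i) F)"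
      using F \<open>i \<in> I\<close> by (rule cauchy_filter_coordinate)
    then obtain b where "b \<in> B" "\<forall>D\<in>\<V>. eventually (\<lambda>x. (b, x) \<in> D) (filtermap (\<lambda>\<phi>. \<phi> i) F)"
      using assms unfolding complete_unif_def by blast
    then show "\<exists>b. b \<in> B \<and> (\<forall>D\<in>\<V>. eventually (\<lambda>\<phi>. (b, \<phi> i) \<in> D) F)"
      unfolding eventually_filtermap by blast
  qed
  from bchoice[OF this] obtain y
    where y: "\<forall>i\<in>I. y i \<in> B \<and> (\<forall>D\<in>\<V>. eventually (\<lambda>\<phi>. (y i, \<phi> i) \<in> D) F)" ..
  have F_P: "eventually (\<lambda>\<phi>. \<phi> \<in> Pi\<^sub>E I (\<lambda>_. B)) F"
    using F unfolding cauchy_filter_def by simp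
  have "restrict y I \<in> Pi\<^sub>E I (\<lambda>_. B)" using y by auto
  moreover have "eventually (\<lambda>\<phi>. (restrict y I, \<phi>) \<in> E) F" if E: "E \<in> prod_unif I B \<V>" for E
  proof -
    obtain K D where "finite K" "K \<subseteq> I" "D \<in> \<V>" "prod_box I B K D \<subseteq> E"
      using E unfolding mem_prod_unif by blast
    then have "eventually (\<lambda>\<phi>. \<forall>i\<in>K. (y i, \<phi> i) \<in> D) F"
      using y by (subst eventually_ball_finite_distrib) auto
    then have "eventually (\<lambda>\<phi>. (restrict y I, \<phi>) \<in> prod_box I B K D) F"
      using F_P by eventually_elim
        (use \<open>restrict y I \<in> Pi\<^sub>E I (\<lambda>_. B)\<close> \<open>K \<subseteq> I\<close> in \<open>auto simp: prod_box_def\<close>)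
    then show ?thesis
      by (rule eventually_mono) (use \<open>prod_box I B K D \<subseteq> E\<close> in blast)
  qed
  ultimately show "\<exists>y\<in>Pi\<^sub>E I (\<lambda>_. B). \<forall>E\<in>prod_unif I B \<V>. eventually (\<lambda>\<phi>. (y, \<phi>) \<in> E) F"
    by blast
qed

lemma pullback_prod_unif:
  assumes "j ` A \<subseteq> Pi\<^sub>E I (\<lambda>_. B)"
  shows "pullback_unif A j (prod_unif I B \<V>) =
    gen_unif A {{(a, b) \<in> A \<times> A. \<forall>i\<in>set is. (j a i, j b i) \<in> D} | is D. set is \<subseteq> I \<and> D \<in> \<V>}"
    (is "_ = gen_unif A ?\<B>")
proof -
  have box: "{(a, b) \<in> A \<times> A. \<forall>i\<in>K. (j a i, j b i) \<in> D} =
      {(a, b) \<in> A \<times> A. (j a, j b) \<in> prod_box I B K D}" for K D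
    using assms by (auto simp: prod_box_def)
  show ?thesis
  proof (intro set_eqI iffI)
    fix E
    assume "E \<in> pullback_unif A j (prod_unif I B \<V>)"
    then obtain E' where E: "E \<subseteq> A \<times> A" "E' \<in> prod_unif I B \<V>"
      "{(a, b) \<in> A \<times> A. (j a, j b) \<in> E'} \<subseteq> E"
      unfolding pullback_unif_def by blast
    then obtain K D where "finite K" "K \<subseteq> I" "D \<in> \<V>" "prod_box I B K D \<subseteq> E'"
      unfolding mem_prod_unif by blast
    moreover obtain "is" where "set is = K" using \<open>finite K\<close> finite_list by blast
    ultimately have "{(a, b) \<in> A \<times> A. \<forall>i\<in>set is. (j a i, j b i) \<in> D} \<in> ?\<B>"
      and "{(a, b) \<in> A \<times> A. \<forall>i\<in>set is. (j a i, j b i) \<in> D} \<subseteq> E"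
      using E(3) unfolding box by auto
    then show "E \<in> gen_unif A ?\<B>" using E(1) unfolding mem_gen_unif by blast
  next
    fix E
    assume "E \<in> gen_unif A ?\<B>"
    then obtain "is" D where E: "E \<subseteq> A \<times> A" "set is \<subseteq> I" "D \<in> \<V>"
      "{(a, b) \<in> A \<times> A. \<forall>i\<in>set is. (j a i, j b i) \<in> D} \<subseteq> E"
      unfolding mem_gen_unif by blast
    have "prod_box I B (set is) D \<in> prod_unif I B \<V>"
      using E(2,3) by (intro prod_box_in_prod_unif) auto
    with E(1,4) show "E \<in> pullback_unif A j (prod_unif I B \<V>)"
      unfolding pullback_unif_def box by blast
  qed
qed

lemma is_completion_closure_in_power:
  assumes "uniformity_on B \<V>" "complete_unif B \<V>" "separated_unif B \<V>"
    and "j ` A \<subseteq> Pi\<^sub>E I (\<lambda>_. B)" "inj_on j A"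
  defines "C \<equiv> unif_closure (Pi\<^sub>E I (\<lambda>_. B)) (prod_unif I B \<V>) (j ` A)"
  shows "is_completion A (pullback_unif A j (prod_unif I B \<V>)) j C (restrict_unif C (prod_unif I B \<V>))"
  unfolding C_def using assms(4,5)
  by (rule is_completion_unif_closure[OF uniformity_on_prod_unif complete_prod_unif separated_prod_unif,
        OF assms(1-3)])

section \<open>Uniformities of a permutation group\<close>

lemma St_antimono: "set xs \<subseteq> set ys \<Longrightarrow> St G ys \<subseteq> St G xs"
  by (auto simp: St_def)

lemma orb_rel_antimono: "set xs \<subseteq> set ys \<Longrightarrow> orb_rel G ys \<subseteq> orb_rel G xs"
  unfolding orb_rel_def using St_antimono by blast

lemma mem_UX: "W \<in> UX G \<longleftrightarrow> (\<exists>xs. orb_rel G xs \<subseteq> W)"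
  by (auto simp: UX_def gen_unif_def)

definition orbit_entourage :: "('a \<Rightarrow> 'a) set \<Rightarrow> 'a list \<Rightarrow> (('a \<Rightarrow> 'a) \<times> ('a \<Rightarrow> 'a)) set"
  where "orbit_entourage G xs = {(g, h) \<in> G \<times> G. \<forall>x\<in>set xs. (g x, h x) \<in> orb_rel G xs}"

lemma orbit_entourage_antimono:
  assumes "set xs \<subseteq> set ys"
  shows "orbit_entourage G ys \<subseteq> orbit_entourage G xs"
  using assms orb_rel_antimono[OF assms] unfolding orbit_entourage_def by auto

lemma UG_eq_gen_unif_orbit_entourage: "UG G = gen_unif G (range (orbit_entourage G))"
  unfolding UG_def
proof (rule gen_unif_eqI)
  fix P assume "P \<in> {{(g, h) \<in> G \<times> G. \<forall>x\<in>set xs. (g x, h x) \<in> W} | xs W. W \<in> UX G}"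
  then obtain xs W where P: "P = {(g, h) \<in> G \<times> G. \<forall>x\<in>set xs. (g x, h x) \<in> W}" and "W \<in> UX G"
    by blast
  then obtain ys where "orb_rel G ys \<subseteq> W" unfolding mem_UX by blast
  then have "orbit_entourage G (xs @ ys) \<subseteq> P"
    using orb_rel_antimono[of ys "xs @ ys" G]
    unfolding P orbit_entourage_def by auto
  then show "\<exists>Q\<in>range (orbit_entourage G). Q \<subseteq> P" by blast
next
  fix P assume "P \<in> range (orbit_entourage G)"
  then obtain xs where P: "P = {(g, h) \<in> G \<times> G. \<forall>x\<in>set xs. (g x, h x) \<in> orb_rel G xs}"
    unfolding orbit_entourage_def by blast
  moreover have "orb_rel G xs \<in> UX G" unfolding mem_UX by blast
  ultimately show "\<exists>Q\<in>{{(g, h) \<in> G \<times> G. \<forall>x\<in>set xs. (g x, h x) \<in> W} | xs W. W \<in> UX G}. Q \<subseteq> P"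
    by blast
qed

lemma mem_UG: "E \<in> UG G \<longleftrightarrow> E \<subseteq> G \<times> G \<and> (\<exists>xs. orbit_entourage G xs \<subseteq> E)"
  unfolding UG_eq_gen_unif_orbit_entourage mem_gen_unif by blast

definition left_entourage :: "('a \<Rightarrow> 'a) set \<Rightarrow> 'a list \<Rightarrow> (('a \<Rightarrow> 'a) \<times> ('a \<Rightarrow> 'a)) set"
  where "left_entourage G xs = {(g, h) \<in> G \<times> G. \<exists>s\<in>St G xs. h = g \<circ> s}"

definition right_entourage :: "('a \<Rightarrow> 'a) set \<Rightarrow> 'a list \<Rightarrow> (('a \<Rightarrow> 'a) \<times> ('a \<Rightarrow> 'a)) set"
  where "right_entourage G xs = {(g, h) \<in> G \<times> G. \<exists>s\<in>St G xs. h = s \<circ> g}"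

lemma mem_left_unif: "E \<in> left_unif G \<longleftrightarrow> E \<subseteq> G \<times> G \<and> (\<exists>xs. left_entourage G xs \<subseteq> E)"
  by (auto simp: left_unif_def left_entourage_def gen_unif_def)

lemma mem_right_unif: "E \<in> right_unif G \<longleftrightarrow> E \<subseteq> G \<times> G \<and> (\<exists>xs. right_entourage G xs \<subseteq> E)"
  by (auto simp: right_unif_def right_entourage_def gen_unif_def)

definition double_coset_condition :: "('a \<Rightarrow> 'a) set \<Rightarrow> bool" where
  "double_coset_condition G \<longleftrightarrow> (\<forall>xs g h. g \<in> G \<longrightarrow> h \<in> G \<longrightarrow>
      (\<forall>x\<in>set xs. \<exists>f\<in>St G xs. h x = f (g x)) \<longrightarrow>
      (\<exists>f\<in>St G xs. \<exists>s\<in>St G xs. h = f \<circ> (g \<circ> s)))"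

lemma roelcke_unif_eqI:
  assumes "unif_glb G (left_unif G) (right_unif G) \<W>"
  shows "roelcke_unif G = \<W>"
  unfolding roelcke_unif_def using assms by (rule the_equality) (rule unif_glb_unique[OF _ assms])

context
  fixes G :: "('a \<Rightarrow> 'a) set"
  assumes G: "perm_group G"
begin

lemma id_in_St: "id \<in> St G xs"
  using G by (simp add: perm_group_def St_def)

lemma comp_in_St: "f \<in> St G xs \<Longrightarrow> g \<in> St G xs \<Longrightarrow> f \<circ> g \<in> St G xs"
  using G by (simp add: perm_group_def St_def)

lemma inv_in_St:
  assumes "f \<in> St G xs"
  shows "inv f \<in> St G xs"
proof -
  have "f \<in> G" "\<forall>x\<in>set xs. f x = x" using assms by (auto simp: St_def)
  moreover from \<open>f \<in> G\<close> have "bij f" "inv f \<in> G" using G by (auto simp: perm_group_def)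
  ultimately show ?thesis by (auto simp: St_def bij_is_inj inv_f_eq)
qed

lemma orb_rel_refl: "(x, x) \<in> orb_rel G xs"
proof -
  have "x = id x" by simp
  with id_in_St show ?thesis unfolding orb_rel_def by blast
qed

lemma orb_rel_sym:
  assumes "(x, y) \<in> orb_rel G xs"
  shows "(y, x) \<in> orb_rel G xs"
proof -
  obtain f where "f \<in> St G xs" "y = f x" using assms by (auto simp: orb_rel_def)
  moreover have "bij f" using \<open>f \<in> St G xs\<close> G by (auto simp: St_def perm_group_def)
  ultimately have "inv f \<in> St G xs" "x = inv f y" by (simp_all add: inv_in_St bij_is_inj)
  then show ?thesis unfolding orb_rel_def by blast
qed

lemma orb_rel_trans:
  assumes "(x, y) \<in> orb_rel G xs" "(y, z) \<in> orb_rel G xs"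
  shows "(x, z) \<in> orb_rel G xs"
proof -
  obtain f g where "f \<in> St G xs" "y = f x" "g \<in> St G xs" "z = g y"
    using assms by (auto simp: orb_rel_def)
  then have "g \<circ> f \<in> St G xs" "z = (g \<circ> f) x" by (simp_all add: comp_in_St)
  then show ?thesis unfolding orb_rel_def by blast
qed

lemma equiv_orb_rel: "equiv UNIV (orb_rel G xs)"
  by (intro equivI refl_onI symI transI) (auto intro: orb_rel_refl orb_rel_sym orb_rel_trans)

lemma uniformity_on_UG: "uniformity_on G (UG G)"
  unfolding UG_eq_gen_unif_orbit_entourage
proof (rule uniformity_on_gen_unif)
  show "range (orbit_entourage G) \<noteq> {}" by blast
next
  fix P assume "P \<in> range (orbit_entourage G)"
  then obtain xs where P: "P = orbit_entourage G xs" by blast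
  show "Id_on G \<subseteq> P \<and> P \<subseteq> G \<times> G"
    unfolding P orbit_entourage_def using orb_rel_refl by auto
  have "P \<subseteq> P\<inverse>" unfolding P orbit_entourage_def using orb_rel_sym by auto
  then show "\<exists>Q\<in>range (orbit_entourage G). Q \<subseteq> P\<inverse>" using P by blast
  have "P O P \<subseteq> P" unfolding P orbit_entourage_def by (auto intro: orb_rel_trans)
  then show "\<exists>Q\<in>range (orbit_entourage G). Q O Q \<subseteq> P" using P by blast
next
  fix P Q assume "P \<in> range (orbit_entourage G)" "Q \<in> range (orbit_entourage G)"
  then obtain xs ys where "P = orbit_entourage G xs" "Q = orbit_entourage G ys" by blast
  then have "orbit_entourage G (xs @ ys) \<subseteq> P \<inter> Q"
    using orbit_entourage_antimono[of xs "xs @ ys" G] orbit_entourage_antimono[of ys "xs @ ys" G]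
    by auto
  then show "\<exists>R\<in>range (orbit_entourage G). R \<subseteq> P \<inter> Q" by blast
qed

lemma UG_subset_left_unif: "UG G \<subseteq> left_unif G"
proof
  fix E assume "E \<in> UG G"
  then obtain xs where "E \<subseteq> G \<times> G" "orbit_entourage G xs \<subseteq> E" unfolding mem_UG by blast
  moreover have "left_entourage G xs \<subseteq> orbit_entourage G xs"
    unfolding left_entourage_def orbit_entourage_def orb_rel_def
    using id_in_St by (auto simp: St_def)
  ultimately show "E \<in> left_unif G" unfolding mem_left_unif by blast
qed

lemma UG_subset_right_unif: "UG G \<subseteq> right_unif G"
proof
  fix E assume "E \<in> UG G"
  then obtain xs where "E \<subseteq> G \<times> G" "orbit_entourage G xs \<subseteq> E" unfolding mem_UG by blast
  moreover have "right_entourage G xs \<subseteq> orbit_entourage G xs"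
    unfolding right_entourage_def orbit_entourage_def orb_rel_def by auto
  ultimately show "E \<in> right_unif G" unfolding mem_right_unif by blast
qed

lemma orbit_entourage_subset_relcomp:
  assumes "double_coset_condition G"
  shows "orbit_entourage G (xs @ ys) \<subseteq> right_entourage G ys O left_entourage G xs"
proof
  fix p assume "p \<in> orbit_entourage G (xs @ ys)"
  then obtain g h where p: "p = (g, h)" and "g \<in> G" "h \<in> G"
    and "\<forall>x\<in>set (xs @ ys). \<exists>f\<in>St G (xs @ ys). h x = f (g x)"
    by (auto simp: orbit_entourage_def orb_rel_def)
  then obtain f s where f: "f \<in> St G (xs @ ys)" and s: "s \<in> St G (xs @ ys)" and h: "h = f \<circ> (g \<circ> s)"
    using assms unfolding double_coset_condition_def by blast
  have "f \<in> St G ys" "s \<in> St G xs" using f s St_antimono[of _ "xs @ ys"] by auto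
  moreover have "f \<circ> g \<in> G" using G \<open>g \<in> G\<close> f by (auto simp: perm_group_def St_def)
  ultimately have "(g, f \<circ> g) \<in> right_entourage G ys" "(f \<circ> g, h) \<in> left_entourage G xs"
    using \<open>g \<in> G\<close> \<open>h \<in> G\<close> h by (auto simp: right_entourage_def left_entourage_def comp_assoc)
  then show "p \<in> right_entourage G ys O left_entourage G xs" unfolding p by (rule relcompI)
qed

lemma subset_UG_if_double_coset_condition:
  assumes "double_coset_condition G"
    and \<V>: "uniformity_on G \<V>" "\<V> \<subseteq> left_unif G" "\<V> \<subseteq> right_unif G"
  shows "\<V> \<subseteq> UG G"
proof
  fix E assume "E \<in> \<V>"
  then obtain F where "F \<in> \<V>" "F O F \<subseteq> E" using uniformity_onD(6)[OF \<V>(1)] by blast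
  then have "F \<in> left_unif G" "F \<in> right_unif G" using \<V>(2,3) by blast+
  then obtain xs ys where "left_entourage G xs \<subseteq> F" "right_entourage G ys \<subseteq> F"
    unfolding mem_left_unif mem_right_unif by blast
  then have "orbit_entourage G (xs @ ys) \<subseteq> F O F"
    using orbit_entourage_subset_relcomp[OF assms(1)] by blast
  with \<open>F O F \<subseteq> E\<close> have "orbit_entourage G (xs @ ys) \<subseteq> E" by (rule order_trans[rotated])
  moreover have "E \<subseteq> G \<times> G" using uniformity_onD(2)[OF \<V>(1) \<open>E \<in> \<V>\<close>] .
  ultimately show "E \<in> UG G" unfolding mem_UG by blast
qed

lemma roelcke_unif_eq_UG:
  assumes "double_coset_condition G"
  shows "roelcke_unif G = UG G"
proof (rule roelcke_unif_eqI)
  show "unif_glb G (left_unif G) (right_unif G) (UG G)"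
    unfolding unif_glb_def
    using uniformity_on_UG UG_subset_left_unif UG_subset_right_unif
      subset_UG_if_double_coset_condition[OF assms] by blast
qed

lemma totally_bounded_UG:
  assumes "totally_bounded_unif UNIV (UX G)"
  shows "totally_bounded_unif G (UG G)"
  unfolding totally_bounded_unif_def
proof
  fix E assume "E \<in> UG G"
  then obtain zs where "orbit_entourage G zs \<subseteq> E" unfolding mem_UG by blast
  define Orb where "Orb = orb_rel G zs"
  have Orb: "equiv UNIV Orb" unfolding Orb_def by (rule equiv_orb_rel)
  have "Orb \<in> UX G" unfolding Orb_def mem_UX by blast
  then obtain Y where "finite Y" and cover: "UNIV \<subseteq> (\<Union>y\<in>Y. Orb `` {y})"
    using assms unfolding totally_bounded_unif_def by auto
  define key where "key g = map (\<lambda>x. Orb `` {g x}) zs" for g :: "'a \<Rightarrow> 'a"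
  have "Orb `` {z} \<in> (\<lambda>y. Orb `` {y}) ` Y" for z
  proof -
    obtain y where "y \<in> Y" "(y, z) \<in> Orb" using cover by blast
    then show ?thesis using equiv_class_eq[OF Orb] by (metis image_eqI)
  qed
  then have "key ` G \<subseteq> {l. set l \<subseteq> (\<lambda>y. Orb `` {y}) ` Y \<and> length l = length zs}"
    unfolding key_def by auto
  then have "finite (key ` G)"
    using finite_lists_length_eq[OF finite_imageI[OF \<open>finite Y\<close>]] by (rule finite_subset)
  define R where "R = inv_into G key ` key ` G"
  have "finite R" "R \<subseteq> G" using \<open>finite (key ` G)\<close> by (auto simp: R_def inv_into_into)
  moreover have "G \<subseteq> (\<Union>g\<in>R. E `` {g})"
  proof
    fix h assume "h \<in> G"
    define g where "g = inv_into G key (key h)"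
    have "g \<in> R" "g \<in> G" "key g = key h"
      using \<open>h \<in> G\<close> by (auto simp: g_def R_def inv_into_into f_inv_into_f)
    then have "(g x, h x) \<in> Orb" if "x \<in> set zs" for x
      using that eq_equiv_class_iff[OF Orb UNIV_I UNIV_I] by (simp add: key_def)
    then have "(g, h) \<in> orbit_entourage G zs"
      using \<open>g \<in> G\<close> \<open>h \<in> G\<close> by (auto simp: orbit_entourage_def Orb_def)
    with \<open>orbit_entourage G zs \<subseteq> E\<close> \<open>g \<in> R\<close> show "h \<in> (\<Union>g\<in>R. E `` {g})" by blast
  qed
  ultimately show "\<exists>R. finite R \<and> R \<subseteq> G \<and> G \<subseteq> (\<Union>g\<in>R. E `` {g})" by blast
qed

end

section \<open>Embeddings into powers of the completion of X\<close>

lemma mem_UX_if_completion: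
  assumes "is_completion UNIV (UX G) e B \<V>"
  shows "W \<in> UX G \<longleftrightarrow> (\<exists>D\<in>\<V>. {(a, b). (e a, e b) \<in> D} \<subseteq> W)"
  using assms by (simp add: is_completion_def unif_embedding_iff pullback_unif_def)

lemma UG_entourageI:
  "W \<in> UX G \<Longrightarrow> {(g, h) \<in> G \<times> G. \<forall>x\<in>set xs. (g x, h x) \<in> W} \<in> UG G"
  unfolding UG_def mem_gen_unif by blast

lemma mem_UGt:
  "E \<in> UGt G B \<V> ext \<longleftrightarrow> E \<subseteq> G \<times> G \<and>
     (\<exists>ys D. set ys \<subseteq> B \<and> D \<in> \<V> \<and> {(g, h) \<in> G \<times> G. \<forall>y\<in>set ys. (ext g y, ext h y) \<in> D} \<subseteq> E)"
  unfolding UGt_def mem_gen_unif by blast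

lemma UG_eq_pullback_comp:
  assumes c: "is_completion UNIV (UX G) e B \<V>"
  shows "UG G = pullback_unif G (\<lambda>g. e \<circ> g) (prod_unif UNIV B \<V>)"
proof -
  have "e x \<in> B" for x using c by (auto simp: is_completion_def unif_embedding_def)
  then have "(\<lambda>g. e \<circ> g) ` G \<subseteq> Pi\<^sub>E UNIV (\<lambda>_. B)" by auto
  then have "pullback_unif G (\<lambda>g. e \<circ> g) (prod_unif UNIV B \<V>) =
      gen_unif G {{(g, h) \<in> G \<times> G. \<forall>x\<in>set xs. (e (g x), e (h x)) \<in> D} | xs D. D \<in> \<V>}"
    by (simp add: pullback_prod_unif)
  also have "\<dots> = UG G"
    unfolding UG_def
  proof (rule gen_unif_eqI)
    fix P assume "P \<in> {{(g, h) \<in> G \<times> G. \<forall>x\<in>set xs. (e (g x), e (h x)) \<in> D} | xs D. D \<in> \<V>}"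
    then obtain xs D where "D \<in> \<V>" and P: "P = {(g, h) \<in> G \<times> G. \<forall>x\<in>set xs. (e (g x), e (h x)) \<in> D}"
      by blast
    then have "{(a, b). (e a, e b) \<in> D} \<in> UX G" using mem_UX_if_completion[OF c] by blast
    moreover have "P = {(g, h) \<in> G \<times> G. \<forall>x\<in>set xs. (g x, h x) \<in> {(a, b). (e a, e b) \<in> D}}"
      unfolding P by simp
    ultimately show "\<exists>Q\<in>{{(g, h) \<in> G \<times> G. \<forall>x\<in>set xs. (g x, h x) \<in> W} | xs W. W \<in> UX G}. Q \<subseteq> P"
      by blast
  next
    fix P assume "P \<in> {{(g, h) \<in> G \<times> G. \<forall>x\<in>set xs. (g x, h x) \<in> W} | xs W. W \<in> UX G}"
    then obtain xs W where "W \<in> UX G" and P: "P = {(g, h) \<in> G \<times> G. \<forall>x\<in>set xs. (g x, h x) \<in> W}"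
      by blast
    then obtain D where "D \<in> \<V>" "{(a, b). (e a, e b) \<in> D} \<subseteq> W"
      using mem_UX_if_completion[OF c] by blast
    then have "{(g, h) \<in> G \<times> G. \<forall>x\<in>set xs. (e (g x), e (h x)) \<in> D} \<subseteq> P"
      unfolding P by auto
    with \<open>D \<in> \<V>\<close>
    show "\<exists>Q\<in>{{(g, h) \<in> G \<times> G. \<forall>x\<in>set xs. (e (g x), e (h x)) \<in> D} | xs D. D \<in> \<V>}. Q \<subseteq> P"
      by blast
  qed
  finally show ?thesis ..
qed

lemma is_completion_comp_closure:
  assumes c: "is_completion UNIV (UX G) e B \<V>"
  defines "C \<equiv> unif_closure (Pi\<^sub>E UNIV (\<lambda>_. B)) (prod_unif UNIV B \<V>) ((\<lambda>g. e \<circ> g) ` G)"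
  shows "is_completion G (UG G) (\<lambda>g. e \<circ> g) C (restrict_unif C (prod_unif UNIV B \<V>))"
proof -
  have "uniformity_on B \<V>" "complete_unif B \<V>" "separated_unif B \<V>" "inj e" "range e \<subseteq> B"
    using c by (simp_all add: is_completion_def unif_embedding_def)
  moreover have "(\<lambda>g. e \<circ> g) ` G \<subseteq> Pi\<^sub>E UNIV (\<lambda>_. B)" using \<open>range e \<subseteq> B\<close> by auto
  moreover have "inj_on (\<lambda>g. e \<circ> g) G"
    using \<open>inj e\<close> by (auto intro!: inj_onI simp: fun_eq_iff inj_eq)
  ultimately show ?thesis
    unfolding C_def UG_eq_pullback_comp[OF c] by (intro is_completion_closure_in_power)
qed

context
  fixes G :: "('a \<Rightarrow> 'a) set" and e :: "'a \<Rightarrow> 'b" and B \<V> ext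
  assumes c: "is_completion UNIV (UX G) e B \<V>"
    and ext_e: "\<forall>g\<in>G. \<forall>x. ext g (e x) = e (g x)"
begin

lemma UGt_eq_pullback_restrict:
  assumes "\<And>g. g \<in> G \<Longrightarrow> ext g ` B \<subseteq> B"
  shows "UGt G B \<V> ext = pullback_unif G (\<lambda>g. restrict (ext g) B) (prod_unif B B \<V>)"
proof -
  have "restrict (ext g) B \<in> Pi\<^sub>E B (\<lambda>_. B)" if "g \<in> G" for g
    using assms[OF that] by auto
  then have "(\<lambda>g. restrict (ext g) B) ` G \<subseteq> Pi\<^sub>E B (\<lambda>_. B)" by (rule image_subsetI)
  then have "pullback_unif G (\<lambda>g. restrict (ext g) B) (prod_unif B B \<V>) =
      gen_unif G {{(g, h) \<in> G \<times> G. \<forall>y\<in>set ys. (restrict (ext g) B y, restrict (ext h) B y) \<in> D}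
        | ys D. set ys \<subseteq> B \<and> D \<in> \<V>}"
    by (rule pullback_prod_unif)
  also have "\<dots> = UGt G B \<V> ext"
    unfolding UGt_def
    by (rule arg_cong[where f = "gen_unif G"]) (auto cong: Collect_cong)
  finally show ?thesis ..
qed

lemma is_completion_restrict_ext_closure:
  assumes "\<forall>g\<in>G. unif_continuous B \<V> B \<V> (ext g)"
  defines "C \<equiv> unif_closure (Pi\<^sub>E B (\<lambda>_. B)) (prod_unif B B \<V>) ((\<lambda>g. restrict (ext g) B) ` G)"
  shows "is_completion G (UGt G B \<V> ext) (\<lambda>g. restrict (ext g) B) C (restrict_unif C (prod_unif B B \<V>))"
proof -
  have \<V>: "uniformity_on B \<V>" "complete_unif B \<V>" "separated_unif B \<V>"
    and "inj e" "range e \<subseteq> B"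
    using c by (simp_all add: is_completion_def unif_embedding_def)
  have ext_B: "ext g ` B \<subseteq> B" if "g \<in> G" for g using assms that by (simp add: unif_continuous_def)
  then have "restrict (ext g) B \<in> Pi\<^sub>E B (\<lambda>_. B)" if "g \<in> G" for g
    using that by auto
  then have "(\<lambda>g. restrict (ext g) B) ` G \<subseteq> Pi\<^sub>E B (\<lambda>_. B)" by (rule image_subsetI)
  moreover have "inj_on (\<lambda>g. restrict (ext g) B) G"
  proof (rule inj_onI)
    fix g h assume "g \<in> G" "h \<in> G" "restrict (ext g) B = restrict (ext h) B"
    have "e (g x) = e (h x)" for x
    proof -
      have "e x \<in> B" using \<open>range e \<subseteq> B\<close> by blast
      then have "ext g (e x) = ext h (e x)"
        using fun_cong[OF \<open>restrict (ext g) B = restrict (ext h) B\<close>, of "e x"] by simp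
      then show ?thesis using ext_e \<open>g \<in> G\<close> \<open>h \<in> G\<close> by simp
    qed
    then show "g = h" using \<open>inj e\<close> by (auto simp: fun_eq_iff inj_eq)
  qed
  ultimately have "is_completion G (pullback_unif G (\<lambda>g. restrict (ext g) B) (prod_unif B B \<V>))
      (\<lambda>g. restrict (ext g) B) C (restrict_unif C (prod_unif B B \<V>))"
    unfolding C_def using \<V> by (rule is_completion_closure_in_power[rotated 3])
  then show ?thesis using UGt_eq_pullback_restrict ext_B by simp
qed

context
  assumes G: "perm_group G"
    and remainder: "\<forall>x \<in> B - e ` UNIV. \<forall>U\<in>\<V>. \<exists>xs V. V \<in> \<V> \<and>
          (\<forall>g\<in>G. {h \<in> G. \<forall>y\<in>set xs. (e (g y), e (h y)) \<in> V}
                   \<subseteq> {h \<in> G. (ext g x, ext h x) \<in> U})"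
begin

lemma coordinate_entourage_in_UG:
  assumes "y \<in> B" "D \<in> \<V>"
  shows "{(g, h) \<in> G \<times> G. (ext g y, ext h y) \<in> D} \<in> UG G"
proof -
  obtain xs V where "V \<in> \<V>"
    and sub: "{(g, h) \<in> G \<times> G. \<forall>x\<in>set xs. (e (g x), e (h x)) \<in> V} \<subseteq>
      {(g, h) \<in> G \<times> G. (ext g y, ext h y) \<in> D}"
  proof (cases "y \<in> range e")
    case True
    then obtain x where "y = e x" by blast
    with ext_e have "{(g, h) \<in> G \<times> G. \<forall>x'\<in>set [x]. (e (g x'), e (h x')) \<in> D} \<subseteq>
        {(g, h) \<in> G \<times> G. (ext g y, ext h y) \<in> D}" by auto
    with \<open>D \<in> \<V>\<close> show ?thesis by (rule that)
  next
    case False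
    with \<open>y \<in> B\<close> have "y \<in> B - e ` UNIV" by blast
    obtain xs V where "V \<in> \<V>"
      and ctrl: "\<forall>g\<in>G. {h \<in> G. \<forall>x\<in>set xs. (e (g x), e (h x)) \<in> V} \<subseteq> {h \<in> G. (ext g y, ext h y) \<in> D}"
      using remainder[rule_format, OF \<open>y \<in> B - e ` UNIV\<close> \<open>D \<in> \<V>\<close>] by blast
    have "(ext g y, ext h y) \<in> D"
      if "g \<in> G" "h \<in> G" "\<forall>x\<in>set xs. (e (g x), e (h x)) \<in> V" for g h
      using ctrl that by blast
    then have "{(g, h) \<in> G \<times> G. \<forall>x\<in>set xs. (e (g x), e (h x)) \<in> V} \<subseteq>
        {(g, h) \<in> G \<times> G. (ext g y, ext h y) \<in> D}" by auto
    with \<open>V \<in> \<V>\<close> show ?thesis by (rule that)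
  qed
  have "{(a, b). (e a, e b) \<in> V} \<in> UX G" using mem_UX_if_completion[OF c] \<open>V \<in> \<V>\<close> by blast
  then have "{(g, h) \<in> G \<times> G. \<forall>x\<in>set xs. (e (g x), e (h x)) \<in> V} \<in> UG G"
    using UG_entourageI[of "{(a, b). (e a, e b) \<in> V}" G xs] by simp
  from this sub show ?thesis by (rule uniformity_onD(3)[OF uniformity_on_UG[OF G]]) auto
qed

lemma UG_eq_UGt: "UG G = UGt G B \<V> ext"
proof (intro subset_antisym subsetI)
  fix E assume "E \<in> UG G"
  then obtain xs W where "E \<subseteq> G \<times> G" "W \<in> UX G"
    and E: "{(g, h) \<in> G \<times> G. \<forall>x\<in>set xs. (g x, h x) \<in> W} \<subseteq> E"
    unfolding UG_def mem_gen_unif by blast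
  then obtain D where "D \<in> \<V>" "{(a, b). (e a, e b) \<in> D} \<subseteq> W"
    using mem_UX_if_completion[OF c] by blast
  with E have "{(g, h) \<in> G \<times> G. \<forall>x\<in>set xs. (e (g x), e (h x)) \<in> D} \<subseteq> E" by blast
  then have "{(g, h) \<in> G \<times> G. \<forall>y\<in>set (map e xs). (ext g y, ext h y) \<in> D} \<subseteq> E"
    using ext_e by auto
  moreover have "set (map e xs) \<subseteq> B" using c by (auto simp: is_completion_def unif_embedding_def)
  ultimately show "E \<in> UGt G B \<V> ext"
    unfolding mem_UGt using \<open>E \<subseteq> G \<times> G\<close> \<open>D \<in> \<V>\<close> by blast
next
  fix E assume "E \<in> UGt G B \<V> ext"
  then obtain ys D where "E \<subseteq> G \<times> G" "set ys \<subseteq> B" "D \<in> \<V>"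
    and E: "{(g, h) \<in> G \<times> G. \<forall>y\<in>set ys. (ext g y, ext h y) \<in> D} \<subseteq> E"
    unfolding mem_UGt by blast
  have "G \<times> G \<inter> (\<Inter>y\<in>set ys. {(g, h) \<in> G \<times> G. (ext g y, ext h y) \<in> D}) \<in> UG G"
    using coordinate_entourage_in_UG[OF _ \<open>D \<in> \<V>\<close>] \<open>set ys \<subseteq> B\<close>
    by (intro uniformity_on_INT[OF uniformity_on_UG[OF G]]) auto
  moreover have "G \<times> G \<inter> (\<Inter>y\<in>set ys. {(g, h) \<in> G \<times> G. (ext g y, ext h y) \<in> D}) \<subseteq> E"
    using E by auto
  ultimately show "E \<in> UG G"
    using \<open>E \<subseteq> G \<times> G\<close> by (rule uniformity_onD(3)[OF uniformity_on_UG[OF G]])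
qed

end

end

theorem theorem4p1:
  fixes G :: "('a \<Rightarrow> 'a) set"
  assumes "infinite (UNIV :: 'a set)"
    and "perm_group G"
  shows
   "((\<forall>xs g h. g \<in> G \<longrightarrow> h \<in> G \<longrightarrow>
        (\<forall>x\<in>set xs. \<exists>f\<in>St G xs. h x = f (g x)) \<longrightarrow>
        (\<exists>f\<in>St G xs. \<exists>s\<in>St G xs. h = f \<circ> (g \<circ> s)))
      \<longrightarrow> roelcke_unif G = UG G)
    \<and>
    (\<forall>(e :: 'a \<Rightarrow> 'b) B \<V>.
       is_completion UNIV (UX G) e B \<V> \<longrightarrow>
       roelcke_unif G = UG G \<longrightarrow> totally_bounded_unif UNIV (UX G) \<longrightarrow>
       totally_bounded_unif G (roelcke_unif G) \<and>
       (let C = unif_closure (Pi\<^sub>E UNIV (\<lambda>_. B)) (prod_unif UNIV B \<V>) ((\<lambda>g. e \<circ> g) ` G)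
        in is_completion G (roelcke_unif G) (\<lambda>g. e \<circ> g) C
             (restrict_unif C (prod_unif UNIV B \<V>))))
    \<and>
    (\<forall>(e :: 'a \<Rightarrow> 'b) B \<V> ext.
       is_completion UNIV (UX G) e B \<V> \<longrightarrow>
       (\<forall>g\<in>G. (\<forall>x. ext g (e x) = e (g x)) \<and> unif_continuous B \<V> B \<V> (ext g)) \<longrightarrow>
       roelcke_unif G = UG G \<longrightarrow> totally_bounded_unif UNIV (UX G) \<longrightarrow>
       (\<forall>x \<in> B - e ` UNIV. \<forall>U\<in>\<V>. \<exists>xs V. V \<in> \<V> \<and>
          (\<forall>g\<in>G. {h \<in> G. \<forall>y\<in>set xs. (e (g y), e (h y)) \<in> V}
                   \<subseteq> {h \<in> G. (ext g x, ext h x) \<in> U})) \<longrightarrow>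
       UG G = UGt G B \<V> ext \<and>
       (let C = unif_closure (Pi\<^sub>E B (\<lambda>_. B)) (prod_unif B B \<V>) ((\<lambda>g. restrict (ext g) B) ` G)
        in is_completion G (roelcke_unif G) (\<lambda>g. restrict (ext g) B) C
             (restrict_unif C (prod_unif B B \<V>))))"
  using assms(2)
  apply (intro conjI allI impI)
  subgoal by (rule roelcke_unif_eq_UG[unfolded double_coset_condition_def])
  subgoal by (simp add: totally_bounded_UG)
  subgoal unfolding Let_def by (simp add: is_completion_comp_closure)
  subgoal by (rule UG_eq_UGt) auto
  subgoal for e B \<V> ext
    unfolding Let_def using UG_eq_UGt[of G e B \<V> ext] is_completion_restrict_ext_closure[of G e B \<V> ext]
    by simp
  done

end
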